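(* Let $X\in\mathbb{R}^{m\times n}$, $\lambda>0$, and let $f:\mathbb{R}^{m\times n}\to\mathbb{R}$ be an arbitrary function. Consider the original R-PCA problem $$\min_{A,E\in\mathbb{R}^{m\times n}} \operatorname{rank}(A)+\lambda f(E)\quad\text{s.t.}\quad X=A+E, \tag{P}$$ and the relaxed R-LRR problem $$\min_{Z\in\mathbb{R}^{n\times n},\,E\in\mathbb{R}^{m\times n}} \|Z\|_*+\lambda f(E)\quad\text{s.t.}\quad X-E=(X-E)Z. \tag{R}$$ (i) If $(A^*,E^* )$ is any minimizer of (P), then $\big((A^* )^\dagger A^*,\,E^*\big)$ is an optimal solution of (R). (ii) Conversely, if $(Z^*,E^* )$ is a minimizer of (R), then $(X-E^*,E^* )$ is an optimal solution of (P).
   Context: $M^\dagger$ denotes the Moore–Penrose pseudo-inverse of $M$, and $\|\cdot\|_*$ denotes the nuclear norm (sum of singular values). *)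

theory Defs
  imports "HOL-Analysis.Analysis"
begin

text \<open>Real matrices: an m x n matrix is an element of real^'n^'m (rows indexed by 'm).\<close>

text \<open>Moore-Penrose pseudo-inverse, via the four Penrose conditions (unique solution).\<close>
definition pinv :: "real^'n^'m \<Rightarrow> real^'m^'n" where
  "pinv A = (THE B. A ** B ** A = A \<and> B ** A ** B = B \<and>
                    transpose (A ** B) = A ** B \<and> transpose (B ** A) = B ** A)"

definition is_diagonal :: "real^'n^'n \<Rightarrow> bool" where
  "is_diagonal D \<longleftrightarrow> (\<forall>i j. i \<noteq> j \<longrightarrow> D $ i $ j = 0)"

text \<open>Nuclear norm = sum of the singular values (with multiplicity); the singular values of A
  are the square roots of the eigenvalues of A^T A, read off an orthogonal diagonalisation
  A^T A = V D V^T.\<close>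
definition nuclear_norm :: "real^'n^'m \<Rightarrow> real" where
  "nuclear_norm A = (THE s. \<exists>V D. orthogonal_matrix V \<and> is_diagonal D \<and>
       transpose A ** A = V ** D ** transpose V \<and> s = (\<Sum>i\<in>UNIV. sqrt (D $ i $ i)))"

definition rpca_opt :: "real^'n^'m \<Rightarrow> real \<Rightarrow> (real^'n^'m \<Rightarrow> real) \<Rightarrow>
    real^'n^'m \<Rightarrow> real^'n^'m \<Rightarrow> bool" where
  "rpca_opt X lam f A E \<longleftrightarrow> X = A + E \<and>
     (\<forall>A' E'. X = A' + E' \<longrightarrow> real (rank A) + lam * f E \<le> real (rank A') + lam * f E')"

definition rlrr_opt :: "real^'n^'m \<Rightarrow> real \<Rightarrow> (real^'n^'m \<Rightarrow> real) \<Rightarrow>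
    real^'n^'n \<Rightarrow> real^'n^'m \<Rightarrow> bool" where
  "rlrr_opt X lam f Z E \<longleftrightarrow> X - E = (X - E) ** Z \<and>
     (\<forall>Z' E'. X - E' = (X - E') ** Z' \<longrightarrow> nuclear_norm Z + lam * f E \<le> nuclear_norm Z' + lam * f E')"

end

theory Submission
  imports Defs
begin

text \<open>For a fixed \<open>E\<close>, every \<open>Z\<close> with \<open>(X - E) Z = X - E\<close> satisfies \<open>\<parallel>Z\<parallel>\<^sub>* \<ge> rank (X - E)\<close>:
  \<open>Z\<^sup>T\<close> fixes the row space of \<open>X - E\<close>, so \<open>Z\<close> does not shrink vectors of that space, and a
  dimension count in an eigenbasis of \<open>Z\<^sup>T Z\<close> yields at least \<open>rank (X - E)\<close> singular values
  \<open>\<ge> 1\<close>. The bound is attained by the orthogonal projection \<open>(X - E)\<^sup>+ (X - E)\<close>, whose nuclear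
  norm is its rank. Hence minimising the objective of (R) over \<open>Z\<close> for fixed \<open>E\<close> gives the
  objective of (P) at \<open>A = X - E\<close>, and the minimisers of the two problems correspond.\<close>

lemma matrix_diff_ldistrib: "(A::real^'n^'m) ** (B - C) = A ** B - A ** C"
  by (simp add: matrix_matrix_mult_def vec_eq_iff sum_subtractf algebra_simps)

lemma matrix_diff_rdistrib: "((A::real^'n^'m) - B) ** C = A ** C - B ** C"
  by (simp add: matrix_matrix_mult_def vec_eq_iff sum_subtractf algebra_simps)

lemma mat_eq_scaleR_mat_1: "(mat c :: real^'n^'n) = c *\<^sub>R mat 1"
  by (simp add: mat_def vec_eq_iff)

lemma mat_vector_mult: "mat c *v (x::real^'n) = c *\<^sub>R x"
  by (simp add: mat_def matrix_vector_mult_def vec_eq_iff if_distrib if_distribR cong: if_cong)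

lemma matrix_mult_mat_right: "(A::real^'n^'m) ** mat c = c *\<^sub>R A"
  by (metis mat_eq_scaleR_mat_1 matrix_scalar_ac matrix_mul_rid)

lemma transpose_diff: "transpose ((A::real^'n^'m) - B) = transpose A - transpose B"
  by (simp add: transpose_def vec_eq_iff)

lemma symmetric_matrix_inner:
  fixes S :: "real^'n^'n"
  assumes "transpose S = S"
  shows "x \<bullet> (S *v y) = (S *v x) \<bullet> y"
  by (metis assms dot_lmul_matrix transpose_matrix_vector)

section \<open>Spectral theorem for real symmetric matrices\<close>

lemma psd_form_null_vector:
  fixes T :: "real^'n^'n"
  assumes sym: "transpose T = T" and U: "subspace U"
    and psd: "\<And>v. v \<in> U \<Longrightarrow> v \<bullet> (T *v v) \<ge> 0"
    and x: "x \<in> U" "x \<bullet> (T *v x) = 0" and y: "y \<in> U"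
  shows "y \<bullet> (T *v x) = 0"
proof -
  define a where "a = y \<bullet> (T *v x)"
  define b where "b = y \<bullet> (T *v y)"
  have b0: "b \<ge> 0" using psd y by (simp add: b_def)
  have expand: "(x + t *\<^sub>R y) \<bullet> (T *v (x + t *\<^sub>R y)) = 2 * t * a + t^2 * b" for t
  proof -
    have "x \<bullet> (T *v y) = a"
      using symmetric_matrix_inner[OF sym, of x y] by (simp add: a_def inner_commute)
    then show ?thesis using x(2)
      by (simp add: a_def b_def matrix_vector_right_distrib matrix_vector_mult_scaleR
          inner_add_left inner_add_right power2_eq_square algebra_simps)
  qed
  define t where "t = - a / (b + 1)"
  have "0 \<le> 2 * t * a + t^2 * b"
    using psd[of "x + t *\<^sub>R y"] expand x y U by (simp add: subspace_add subspace_scale)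
  also have "2 * t * a + t^2 * b = - (a^2) * (b + 2) / (b + 1)^2"
    using b0 by (simp add: t_def divide_simps power2_eq_square) (simp add: algebra_simps)
  finally have "a^2 * (b + 2) \<le> 0"
    using b0 by (auto simp: divide_le_0_iff)
  then have "a^2 \<le> 0" using b0 by (simp add: mult_le_0_iff)
  then show ?thesis by (simp add: a_def)
qed

text \<open>The maximum of the Rayleigh quotient over an invariant subspace is attained at an eigenvector.\<close>
lemma symmetric_matrix_eigenvector_in_subspace:
  fixes S :: "real^'n^'n"
  assumes sym: "transpose S = S" and U: "subspace U" "U \<noteq> {0}"
    and inv: "\<And>x. x \<in> U \<Longrightarrow> S *v x \<in> U"
  obtains x c where "x \<in> U" "norm x = 1" "S *v x = c *\<^sub>R x"
proof -
  define K where "K = U \<inter> sphere 0 1"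
  have K: "compact K" unfolding K_def
    by (intro closed_Int_compact closed_subspace U compact_sphere)
  obtain u where "u \<in> U" "u \<noteq> 0" using U subspace_0 by blast
  then have "u /\<^sub>R norm u \<in> K" using U by (simp add: K_def subspace_scale)
  then have "K \<noteq> {}" by blast
  moreover have "continuous_on K (\<lambda>x. x \<bullet> (S *v x))"
    by (simp add: continuous_on_inner continuous_on_id linear_continuous_on matrix_vector_mul_bounded_linear)
  ultimately obtain x where xK: "x \<in> K" and xmax: "\<forall>y\<in>K. y \<bullet> (S *v y) \<le> x \<bullet> (S *v x)"
    using continuous_attains_sup[OF K] by blast
  define M where "M = x \<bullet> (S *v x)"
  have xU: "x \<in> U" and nx: "norm x = 1" using xK by (auto simp: K_def)
  define T where "T = mat M - S"
  have Tv: "T *v v = M *\<^sub>R v - S *v v" for v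
    by (simp add: T_def matrix_vector_mult_diff_rdistrib mat_vector_mult)
  have psd: "v \<bullet> (T *v v) \<ge> 0" if "v \<in> U" for v
  proof (cases "v = 0")
    case False
    have "v /\<^sub>R norm v \<in> K" using that False U by (simp add: K_def subspace_scale)
    then have "(v /\<^sub>R norm v) \<bullet> (S *v (v /\<^sub>R norm v)) \<le> M" using xmax unfolding M_def by blast
    then have "v \<bullet> (S *v v) \<le> M * (norm v)^2"
      using False by (simp add: matrix_vector_mult_scaleR power2_eq_square field_simps)
    then show ?thesis by (simp add: Tv inner_diff_right power2_norm_eq_inner)
  qed (simp)
  have "x \<bullet> (T *v x) = 0" using nx by (simp add: Tv inner_diff_right M_def norm_eq_1)
  moreover have "transpose T = T" by (simp add: T_def transpose_diff sym)
  moreover have "T *v x \<in> U" using inv[OF xU] xU U(1) by (simp add: Tv subspace_diff subspace_scale)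
  ultimately have "(T *v x) \<bullet> (T *v x) = 0"
    using psd_form_null_vector[OF _ U(1) psd xU] by blast
  then have "S *v x = M *\<^sub>R x" by (simp add: Tv)
  then show ?thesis using that xU nx by blast
qed

lemma symmetric_matrix_orthonormal_eigenbasis:
  fixes S :: "real^'n^'n"
  assumes sym: "transpose S = S"
  shows "subspace U \<Longrightarrow> (\<And>x. x \<in> U \<Longrightarrow> S *v x \<in> U) \<Longrightarrow>
    \<exists>B. B \<subseteq> U \<and> span B = U \<and> pairwise orthogonal B \<and>
        (\<forall>b\<in>B. norm b = 1 \<and> (\<exists>c. S *v b = c *\<^sub>R b))"
proof (induction "dim U" arbitrary: U rule: less_induct)
  case (less U)
  show ?case
  proof (cases "U = {0}")
    case True
    then show ?thesis by (intro exI[of _ "{}"]) auto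
  next
    case False
    obtain x c where xU: "x \<in> U" and nx: "norm x = 1" and ev: "S *v x = c *\<^sub>R x"
      using symmetric_matrix_eigenvector_in_subspace[OF sym less.prems(1) False less.prems(2)] .
    have xx: "x \<bullet> x = 1" using nx by (simp add: norm_eq_1)
    define U' where "U' = U \<inter> {y. x \<bullet> y = 0}"
    have subU': "subspace U'" unfolding U'_def
      by (intro subspace_inter less.prems(1) subspace_hyperplane)
    have invU': "S *v y \<in> U'" if "y \<in> U'" for y
      using that less.prems(2) symmetric_matrix_inner[OF sym, of x y] ev by (simp add: U'_def)
    have "x \<notin> U'" using xx by (simp add: U'_def)
    then have "U' \<subset> U" using xU unfolding U'_def by blast
    then have "dim U' < dim U"
      using subU' less.prems(1) by (metis dim_psubset span_eq_iff)
    then obtain B' where B': "B' \<subseteq> U'" "span B' = U'" "pairwise orthogonal B'"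
        "\<forall>b\<in>B'. norm b = 1 \<and> (\<exists>c. S *v b = c *\<^sub>R b)"
      using less.hyps subU' invU' by blast
    define B where "B = insert x B'"
    have "B \<subseteq> U" using B'(1) xU by (auto simp: B_def U'_def)
    moreover have "pairwise orthogonal B"
      using B'(1,3) by (auto simp: B_def pairwise_insert U'_def orthogonal_def inner_commute)
    moreover have "U \<subseteq> span B"
    proof
      fix u assume u: "u \<in> U"
      have "u - (x \<bullet> u) *\<^sub>R x \<in> U'"
        using u xU xx less.prems(1) by (simp add: U'_def subspace_diff subspace_scale inner_diff_right)
      then have "u - (x \<bullet> u) *\<^sub>R x \<in> span B"
        using B'(2) span_mono[of B' B] by (auto simp: B_def)
      moreover have "(x \<bullet> u) *\<^sub>R x \<in> span B" by (simp add: B_def span_base span_scale)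
      ultimately show "u \<in> span B" using span_add by fastforce
    qed
    then have "span B = U" using \<open>B \<subseteq> U\<close> less.prems(1) by (simp add: span_minimal subset_antisym)
    moreover have "\<forall>b\<in>B. norm b = 1 \<and> (\<exists>c. S *v b = c *\<^sub>R b)"
      using B'(4) nx ev by (auto simp: B_def)
    ultimately show ?thesis by blast
  qed
qed

theorem spectral_theorem:
  fixes S :: "real^'n^'n"
  assumes sym: "transpose S = S"
  obtains V D where "orthogonal_matrix V" "is_diagonal D" "S = V ** D ** transpose V"
proof -
  obtain B where B: "span B = UNIV" "pairwise orthogonal B"
     "\<forall>b\<in>B. norm b = 1 \<and> (\<exists>c. S *v b = c *\<^sub>R b)"
    using symmetric_matrix_orthonormal_eigenbasis[OF sym, of UNIV] by auto
  have "independent B"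
    using B(2,3) pairwise_orthogonal_independent by force
  then have "finite B" "card B = CARD('n)"
    using B(1) dim_span_eq_card_independent finiteI_independent by fastforce+
  then obtain g where g: "bij_betw g (UNIV::'n set) B"
    by (metis finite_same_card_bij finite_class.finite_UNIV)
  then have gB: "g j \<in> B" for j by (auto simp: bij_betw_def)
  define ev where "ev b = (SOME c. S *v b = c *\<^sub>R b)" for b
  have evg: "S *v g j = ev (g j) *\<^sub>R g j" for j
    unfolding ev_def using B(3) gB[of j] by (metis (mono_tags, lifting) someI_ex)
  define V :: "real^'n^'n" where "V = (\<chi> i j. g j $ i)"
  define D :: "real^'n^'n" where "D = (\<chi> i j. if i = j then ev (g i) else 0)"
  have "column j V = g j" for j by (simp add: V_def column_def vec_eq_iff)
  moreover have "g i \<noteq> g j" if "i \<noteq> j" for i j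
    using g that by (auto simp: bij_betw_def inj_on_def)
  ultimately have oV: "orthogonal_matrix V"
    using B(2,3) gB by (auto simp: orthogonal_matrix_orthonormal_columns pairwise_def)
  have "(S ** V) $ i $ j = (V ** D) $ i $ j" for i j
  proof -
    have "(S ** V) $ i $ j = (S *v g j) $ i"
      by (simp add: matrix_matrix_mult_def matrix_vector_mult_def V_def)
    also have "\<dots> = (V ** D) $ i $ j"
      by (simp add: evg matrix_matrix_mult_def V_def D_def if_distrib cong: if_cong)
    finally show ?thesis .
  qed
  then have "S ** V = V ** D" by (simp add: vec_eq_iff)
  then have "S = V ** D ** transpose V"
    using oV by (metis matrix_mul_assoc matrix_mul_rid orthogonal_matrix_def)
  moreover have "is_diagonal D" by (simp add: is_diagonal_def D_def)
  ultimately show ?thesis using that oV by blast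
qed

section \<open>Diagonalisation and the nuclear norm\<close>

lemma diagonal_matrix_vector_mult:
  fixes D :: "real^'n^'n"
  assumes "is_diagonal D"
  shows "D *v x = (\<chi> i. D$i$i * x$i)"
proof -
  have "(\<Sum>j\<in>UNIV. D$i$j * x$j) = (\<Sum>j\<in>UNIV. if i = j then D$i$i * x$i else 0)" for i
    using assms by (intro sum.cong) (auto simp: is_diagonal_def)
  then show ?thesis by (simp add: matrix_vector_mult_def vec_eq_iff)
qed

lemma diagonal_matrix_mult:
  fixes X Y :: "real^'n^'n"
  assumes "is_diagonal X" "is_diagonal Y"
  shows "X ** Y = (\<chi> i j. if i = j then X$i$i * Y$i$i else 0)"
proof -
  have "(\<Sum>k\<in>UNIV. X$i$k * Y$k$j) =
        (\<Sum>k\<in>UNIV. if k = i then (if i = j then X$i$i * Y$i$i else 0) else 0)" for i j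
    using assms by (intro sum.cong) (auto simp: is_diagonal_def)
  then show ?thesis by (simp add: matrix_matrix_mult_def vec_eq_iff)
qed

lemma rank_diagonal:
  fixes D :: "real^'n^'n"
  assumes "is_diagonal D"
  shows "rank D = card {i. D$i$i \<noteq> 0}"
proof -
  let ?J = "{i. D$i$i \<noteq> 0}"
  have "range (\<lambda>x. D *v x) = {x. \<forall>i. i \<notin> ?J \<longrightarrow> x$i = 0}"
  proof (intro subset_antisym subsetI)
    fix x :: "real^'n" assume "x \<in> {x. \<forall>i. i \<notin> ?J \<longrightarrow> x$i = 0}"
    then have "D *v (\<chi> i. x$i / D$i$i) = x"
      using assms by (auto simp: diagonal_matrix_vector_mult vec_eq_iff)
    then show "x \<in> range (\<lambda>x. D *v x)" by (metis rangeI)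
  qed (use assms in \<open>auto simp: diagonal_matrix_vector_mult\<close>)
  then have "rank D = vec.dim {x::real^'n. \<forall>i. i \<notin> ?J \<longrightarrow> x$i = 0}"
    by (simp add: rank_dim_range dim_vec_eq)
  then show ?thesis by (simp only: dim_substandard_cart)
qed

lemma orthogonal_conj_cancel:
  assumes "orthogonal_matrix V"
  shows "transpose V ** (V ** X ** transpose V) ** V = (X::real^'n^'n)"
proof -
  have "transpose V ** (V ** X ** transpose V) ** V = (transpose V ** V) ** X ** (transpose V ** V)"
    by (simp only: matrix_mul_assoc)
  then show ?thesis using assms by (simp add: orthogonal_matrix_def)
qed

lemma orthogonal_conj_mult:
  assumes "orthogonal_matrix V"
  shows "(V ** X ** transpose V) ** (V ** Y ** transpose V) = V ** (X ** Y) ** transpose (V::real^'n^'n)"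
proof -
  have "(V ** X ** transpose V) ** (V ** Y ** transpose V) = V ** X ** (transpose V ** V) ** Y ** transpose V"
    by (simp only: matrix_mul_assoc)
  also have "\<dots> = V ** (X ** Y) ** transpose V"
    using assms by (simp add: orthogonal_matrix_def matrix_mul_assoc)
  finally show ?thesis .
qed

lemma transpose_orthogonal_conj:
  "transpose (V ** X ** transpose V) = V ** transpose X ** transpose (V::real^'n^'n)"
  by (simp add: matrix_transpose_mul matrix_mul_assoc)

lemma rank_orthogonal_conj:
  assumes "orthogonal_matrix V"
  shows "rank (V ** X ** transpose V) = rank (X::real^'n^'n)"
proof (rule antisym)
  show "rank (V ** X ** transpose V) \<le> rank X" for V X :: "real^'n^'n"
    by (metis order_trans rank_mul_le_left rank_mul_le_right)
  from this[of "transpose V" "V ** X ** transpose V"]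
  show "rank X \<le> rank (V ** X ** transpose V)"
    using orthogonal_conj_cancel[OF assms] by simp
qed

text \<open>The multiplicity of an eigenvalue \<open>c\<close> is \<open>n - rank (M - c I)\<close>, which does not depend on
  the chosen diagonalisation.\<close>
lemma rank_diff_mat_spectral:
  assumes oV: "orthogonal_matrix V" and dD: "is_diagonal D"
  shows "rank (V ** D ** transpose V - mat c) = card {i. D$i$i \<noteq> c}"
proof -
  have "V ** (D - mat c) ** transpose V = V ** D ** transpose V - c *\<^sub>R (V ** transpose V)"
    by (simp add: matrix_diff_ldistrib matrix_diff_rdistrib matrix_mult_mat_right scalar_matrix_assoc)
  also have "c *\<^sub>R (V ** transpose V) = mat c"
    using oV by (simp add: orthogonal_matrix_def mat_eq_scaleR_mat_1[of c])
  finally have "rank (V ** D ** transpose V - mat c) = rank (D - mat c)"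
    using rank_orthogonal_conj[OF oV] by metis
  also have "\<dots> = card {i. (D - mat c)$i$i \<noteq> 0}"
    by (rule rank_diagonal) (use dD in \<open>simp add: is_diagonal_def mat_def\<close>)
  finally show ?thesis by (simp add: mat_def)
qed

lemma sum_diagonal_spectral:
  fixes V D :: "real^'n^'n" and h :: "real \<Rightarrow> real"
  assumes oV: "orthogonal_matrix V" and dD: "is_diagonal D"
  shows "(\<Sum>i\<in>UNIV. h (D$i$i)) =
    (\<Sum>c | rank (V ** D ** transpose V - mat c) < CARD('n).
       h c * real (CARD('n) - rank (V ** D ** transpose V - mat c)))"
proof -
  note mult = rank_diff_mat_spectral[OF oV dD]
  have card_eq: "CARD('n) - card {i. D$i$i \<noteq> c} = card {i. D$i$i = c}" for c
  proof -
    have "{i. D$i$i = c} = UNIV - {i. D$i$i \<noteq> c}" by auto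
    then show ?thesis by (simp add: card_Diff_subset)
  qed
  have "card {i. D$i$i \<noteq> c} < CARD('n) \<longleftrightarrow> c \<in> range (\<lambda>i. D$i$i)" for c
  proof -
    have "card {i. D$i$i \<noteq> c} < CARD('n) \<longleftrightarrow> {i. D$i$i \<noteq> c} \<noteq> UNIV"
      using psubset_card_mono[of UNIV "{i. D$i$i \<noteq> c}"] by auto
    then show ?thesis by auto
  qed
  then have eigenvalues: "{c. rank (V ** D ** transpose V - mat c) < CARD('n)} = range (\<lambda>i. D$i$i)"
    by (auto simp: mult)
  have "(\<Sum>i\<in>UNIV. h (D$i$i)) = (\<Sum>c\<in>range (\<lambda>i. D$i$i). \<Sum>i\<in>{x\<in>UNIV. D$x$x = c}. h (D$i$i))"
    by (rule sum.image_gen) simp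
  also have "\<dots> = (\<Sum>c\<in>range (\<lambda>i. D$i$i). h c * real (card {i. D$i$i = c}))"
    by (intro sum.cong refl) simp
  finally show ?thesis unfolding eigenvalues by (simp add: mult card_eq)
qed

lemma sum_diagonal_spectral_unique:
  fixes V D :: "real^'n^'n" and h :: "real \<Rightarrow> real"
  assumes "orthogonal_matrix V" "is_diagonal D" "orthogonal_matrix V'" "is_diagonal D'"
    and "V ** D ** transpose V = V' ** D' ** transpose V'"
  shows "(\<Sum>i\<in>UNIV. h (D$i$i)) = (\<Sum>i\<in>UNIV. h (D'$i$i))"
  unfolding sum_diagonal_spectral[OF assms(1,2)] sum_diagonal_spectral[OF assms(3,4)] assms(5) ..

lemma nuclear_norm_spectral:
  fixes A :: "real^'n^'m"
  assumes "orthogonal_matrix V" "is_diagonal D" "transpose A ** A = V ** D ** transpose V"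
  shows "nuclear_norm A = (\<Sum>i\<in>UNIV. sqrt (D$i$i))"
  unfolding nuclear_norm_def
proof (rule the_equality)
  fix s assume "\<exists>V' D'. orthogonal_matrix V' \<and> is_diagonal D' \<and>
       transpose A ** A = V' ** D' ** transpose V' \<and> s = (\<Sum>i\<in>UNIV. sqrt (D' $ i $ i))"
  then obtain V' D' where V'D': "orthogonal_matrix V'" "is_diagonal D'"
    "V ** D ** transpose V = V' ** D' ** transpose V'" and s: "s = (\<Sum>i\<in>UNIV. sqrt (D' $ i $ i))"
    using assms(3) by auto
  show "s = (\<Sum>i\<in>UNIV. sqrt (D$i$i))"
    unfolding s sum_diagonal_spectral_unique[OF assms(1,2) V'D'] ..
qed (use assms in \<open>intro exI conjI, auto\<close>)

lemma gram_spectral: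
  fixes A :: "real^'n^'m"
  obtains V D where "orthogonal_matrix V" "is_diagonal D" "transpose A ** A = V ** D ** transpose V"
proof -
  have "transpose (transpose A ** A) = transpose A ** A" by (simp add: matrix_transpose_mul)
  then show ?thesis using that by (rule spectral_theorem)
qed

section \<open>Nuclear norm versus rank\<close>

lemma inner_transpose_matrix:
  fixes A :: "real^'n^'m"
  shows "x \<bullet> (transpose A *v y) = (A *v x) \<bullet> y"
  by (metis dot_lmul_matrix inner_commute transpose_matrix_vector)

lemma gram_quadratic_form:
  fixes B :: "real^'n^'m"
  shows "y \<bullet> ((transpose B ** B) *v y) = (B *v y) \<bullet> (B *v y)"
  by (simp only: matrix_vector_mul_assoc[symmetric] inner_transpose_matrix)

lemma gram_diagonal_nonneg:
  fixes B :: "real^'n^'m"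
  shows "(transpose B ** B)$i$i \<ge> 0"
  by (simp add: matrix_matrix_mult_def transpose_def sum_nonneg)

lemma diagonal_quadratic_form:
  fixes D :: "real^'n^'n"
  assumes "is_diagonal D"
  shows "y \<bullet> (D *v y) = (\<Sum>i\<in>UNIV. D$i$i * (y$i)^2)"
  using assms by (simp add: diagonal_matrix_vector_mult inner_vec_def power2_eq_square algebra_simps)

lemma inner_le_if_transpose_fixes:
  fixes Z :: "real^'n^'n"
  assumes "transpose Z *v w = w"
  shows "w \<bullet> w \<le> (Z *v w) \<bullet> (Z *v w)"
proof -
  have "norm w ^ 2 = (Z *v w) \<bullet> w"
    by (metis assms inner_transpose_matrix power2_norm_eq_inner)
  also have "\<dots> \<le> norm (Z *v w) * norm w" by (rule norm_cauchy_schwarz)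
  finally have "norm w \<le> norm (Z *v w)"
    by (cases "w = 0") (auto simp: power2_eq_square mult_le_cancel_right)
  then show ?thesis by (simp add: power2_norm_eq_inner[symmetric] power_mono)
qed

lemma diagonal_quadratic_form_less:
  fixes D :: "real^'n^'n"
  assumes dD: "is_diagonal D" and "y \<noteq> 0" and supp: "\<And>i. 1 \<le> D$i$i \<Longrightarrow> y$i = 0"
  shows "y \<bullet> (D *v y) < y \<bullet> y"
proof -
  obtain k where k: "y$k \<noteq> 0" using \<open>y \<noteq> 0\<close> by (auto simp: vec_eq_iff)
  have le: "D$i$i * (y$i)^2 \<le> (y$i)^2" for i
  proof (cases "1 \<le> D$i$i")
    case False
    then show ?thesis using mult_right_mono[of "D$i$i" 1 "(y$i)^2"] by simp
  qed (simp add: supp)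
  have "D$k$k < 1" using k supp[of k] by force
  then have "D$k$k * (y$k)^2 < 1 * (y$k)^2" using k by (intro mult_strict_right_mono) auto
  then have "(\<Sum>i\<in>UNIV. D$i$i * (y$i)^2) < (\<Sum>i\<in>UNIV. (y$i)^2)"
    using le by (intro sum_strict_mono_ex1) auto
  then show ?thesis
    unfolding diagonal_quadratic_form[OF dD] by (simp add: inner_vec_def power2_eq_square)
qed

text \<open>A subspace on which \<open>D\<close> dominates the identity meets the span of the coordinates with
  \<open>D$i$i < 1\<close> trivially, which bounds its dimension.\<close>
lemma dim_le_card_diagonal_ge_one:
  fixes D :: "real^'n^'n"
  assumes dD: "is_diagonal D" and U: "subspace U"
    and dominates: "\<And>y. y \<in> U \<Longrightarrow> y \<bullet> y \<le> y \<bullet> (D *v y)"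
  shows "dim U \<le> card {i. 1 \<le> D$i$i}"
proof -
  define J where "J = {i. D$i$i < 1}"
  define T where "T = {x::real^'n. \<forall>i. i \<notin> J \<longrightarrow> x$i = 0}"
  have T: "subspace T" by (auto simp: subspace_def T_def)
  have dimT: "dim T = card J"
    unfolding T_def dim_vec_eq[symmetric] by (rule dim_substandard_cart)
  have "y = 0" if "y \<in> U" "y \<in> T" for y
    using that dominates[of y] diagonal_quadratic_form_less[OF dD, of y]
    by (force simp: T_def J_def not_le[symmetric])
  then have "U \<inter> T \<subseteq> {0}" by blast
  then have "dim (U \<inter> T) = 0" by simp
  moreover have "dim {x + y |x y. x \<in> U \<and> y \<in> T} \<le> CARD('n)" by (rule dim_subset_UNIV_cart)
  ultimately have "dim U + card J \<le> CARD('n)"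
    using dim_sums_Int[OF U T] dimT by linarith
  moreover have "{i. 1 \<le> D$i$i} = UNIV - J" by (auto simp: J_def)
  then have "card {i. 1 \<le> D$i$i} = CARD('n) - card J" by (simp add: card_Diff_subset)
  ultimately show ?thesis by linarith
qed

lemma dim_image_transpose_orthogonal:
  assumes "orthogonal_matrix V"
  shows "dim ((\<lambda>w. transpose V *v w) ` W) = dim (W :: (real^'n) set)"
proof (rule antisym)
  have "V *v (transpose V *v w) = w" for w
    using assms by (metis matrix_vector_mul_assoc matrix_vector_mul_lid orthogonal_matrix_def)
  then have "W = (\<lambda>y. V *v y) ` (\<lambda>w. transpose V *v w) ` W"
    unfolding image_comp o_def by simp
  then show "dim W \<le> dim ((\<lambda>w. transpose V *v w) ` W)"
    by (metis dim_image_le matrix_vector_mul_linear)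
qed (rule dim_image_le[OF matrix_vector_mul_linear])

lemma rank_le_nuclear_norm:
  fixes A :: "real^'n^'m" and Z :: "real^'n^'n"
  assumes AZ: "A = A ** Z"
  shows "real (rank A) \<le> nuclear_norm Z"
proof -
  obtain V D where oV: "orthogonal_matrix V" and dD: "is_diagonal D"
    and ZZ: "transpose Z ** Z = V ** D ** transpose V"
    using gram_spectral .
  have D: "D = transpose (Z ** V) ** (Z ** V)"
    using orthogonal_conj_cancel[OF oV, of D] by (simp add: ZZ[symmetric] matrix_transpose_mul matrix_mul_assoc)
  define W where "W = range (\<lambda>x. transpose A *v x)"
  define U where "U = (\<lambda>w. transpose V *v w) ` W"
  have W: "subspace W" unfolding W_def
    by (rule linear_subspace_image[OF matrix_vector_mul_linear subspace_UNIV])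
  have U: "subspace U" unfolding U_def
    by (rule linear_subspace_image[OF matrix_vector_mul_linear W])
  have "dim U = rank A"
    unfolding U_def dim_image_transpose_orthogonal[OF oV] W_def by (metis rank_dim_range rank_transpose)
  moreover have "y \<bullet> y \<le> y \<bullet> (D *v y)" if "y \<in> U" for y
  proof -
    obtain x where y: "y = transpose V *v (transpose A *v x)" using \<open>y \<in> U\<close> unfolding U_def W_def by blast
    define w where "w = V *v y"
    have "w = transpose A *v x"
      using oV by (metis matrix_vector_mul_assoc matrix_vector_mul_lid orthogonal_matrix_def w_def y)
    then have "transpose Z *v w = w"
      using AZ by (metis matrix_transpose_mul matrix_vector_mul_assoc)
    then have "w \<bullet> w \<le> (Z *v w) \<bullet> (Z *v w)" by (rule inner_le_if_transpose_fixes)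
    moreover have "y \<bullet> y = w \<bullet> w"
      using gram_quadratic_form[of y V] oV by (simp add: w_def orthogonal_matrix_def)
    moreover have "y \<bullet> (D *v y) = (Z *v w) \<bullet> (Z *v w)"
      by (simp add: D gram_quadratic_form w_def matrix_vector_mul_assoc)
    ultimately show ?thesis by simp
  qed
  ultimately have "rank A \<le> card {i. 1 \<le> D$i$i}"
    using dim_le_card_diagonal_ge_one[OF dD U] by metis
  also have "real (card {i. 1 \<le> D$i$i}) = (\<Sum>i\<in>UNIV. if 1 \<le> D$i$i then 1 else 0)"
    by (simp add: sum.If_cases)
  also have "\<dots> \<le> (\<Sum>i\<in>UNIV. sqrt (D$i$i))"
    using gram_diagonal_nonneg[of "Z ** V"] by (intro sum_mono) (auto simp: D)
  also have "\<dots> = nuclear_norm Z"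
    by (rule nuclear_norm_spectral[OF oV dD ZZ, symmetric])
  finally show ?thesis by simp
qed

section \<open>Moore--Penrose pseudo-inverse\<close>

lemma transpose_diagonal: "is_diagonal D \<Longrightarrow> transpose D = D"
  by (auto simp: is_diagonal_def transpose_def vec_eq_iff) metis

lemma diagonal_pseudo_inverse:
  fixes D :: "real^'n^'n"
  assumes dD: "is_diagonal D"
  defines "Dp \<equiv> \<chi> i j. if i = j then inverse (D$i$i) else 0"
  shows "D ** Dp ** D = D" "Dp ** D ** Dp = Dp" "D ** Dp = Dp ** D" "is_diagonal Dp"
proof -
  show dDp: "is_diagonal Dp" by (simp add: is_diagonal_def Dp_def)
  have "x * inverse x * x = x" "inverse x * x * inverse x = inverse x" for x :: real
    by (cases "x = 0"; simp)+
  then show "D ** Dp ** D = D" "Dp ** D ** Dp = Dp" "D ** Dp = Dp ** D"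
    using dD dDp by (auto simp: diagonal_matrix_mult vec_eq_iff is_diagonal_def Dp_def mult.commute)
qed

lemma symmetric_pseudo_inverse:
  fixes M :: "real^'n^'n"
  assumes "transpose M = M"
  obtains Mp where "M ** Mp ** M = M" "Mp ** M ** Mp = Mp" "M ** Mp = Mp ** M" "transpose Mp = Mp"
proof -
  obtain V D where oV: "orthogonal_matrix V" and dD: "is_diagonal D" and M: "M = V ** D ** transpose V"
    using spectral_theorem[OF assms] .
  define Dp :: "real^'n^'n" where "Dp = (\<chi> i j. if i = j then inverse (D$i$i) else 0)"
  note Dp = diagonal_pseudo_inverse[OF dD, folded Dp_def]
  note conj = orthogonal_conj_mult[OF oV]
  show ?thesis
  proof
    show "M ** (V ** Dp ** transpose V) ** M = M"
      "(V ** Dp ** transpose V) ** M ** (V ** Dp ** transpose V) = V ** Dp ** transpose V"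
      unfolding M conj Dp(1,2) by (rule refl)+
    show "M ** (V ** Dp ** transpose V) = (V ** Dp ** transpose V) ** M"
      unfolding M conj Dp(3) ..
    show "transpose (V ** Dp ** transpose V) = V ** Dp ** transpose V"
      by (simp add: transpose_orthogonal_conj transpose_diagonal[OF Dp(4)])
  qed
qed

definition penrose_conditions :: "real^'n^'m \<Rightarrow> real^'m^'n \<Rightarrow> bool" where
  "penrose_conditions A B \<longleftrightarrow> A ** B ** A = A \<and> B ** A ** B = B \<and>
     transpose (A ** B) = A ** B \<and> transpose (B ** A) = B ** A"

lemma penrose_conditions_unique:
  fixes A :: "real^'n^'m"
  assumes "penrose_conditions A B" "penrose_conditions A C"
  shows "B = C"
proof -
  have h1: "A ** B ** A = A" and h2: "B ** A ** B = B" and h3: "transpose (A ** B) = A ** B"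
    and h4: "transpose (B ** A) = B ** A" using assms(1) by (auto simp: penrose_conditions_def)
  have c1: "A ** C ** A = A" and c2: "C ** A ** C = C" and c3: "transpose (A ** C) = A ** C"
    and c4: "transpose (C ** A) = C ** A" using assms(2) by (auto simp: penrose_conditions_def)
  have "B = B ** (transpose B ** transpose A)" by (metis h2 h3 matrix_mul_assoc matrix_transpose_mul)
  also have "\<dots> = B ** (transpose B ** transpose (A ** C ** A))" by (simp add: c1)
  also have "\<dots> = B ** transpose (A ** B) ** transpose (A ** C)"
    by (simp add: matrix_transpose_mul matrix_mul_assoc)
  also have "\<dots> = B ** A ** C" by (metis h2 h3 c3 matrix_mul_assoc)
  also have "\<dots> = transpose (B ** A) ** transpose (C ** A) ** C" by (metis h4 c2 c4 matrix_mul_assoc)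
  also have "\<dots> = (transpose (A ** B ** A) ** transpose C) ** C"
    by (simp add: matrix_transpose_mul matrix_mul_assoc)
  also have "\<dots> = C" by (metis h1 c2 c4 matrix_transpose_mul)
  finally show ?thesis .
qed

lemma gram_eq_0_imp_eq_0:
  fixes R :: "real^'n^'m"
  assumes "transpose R ** R = 0"
  shows "R = 0"
proof -
  have "(\<Sum>k\<in>UNIV. R$k$j * R$k$j) = 0" for j
    using arg_cong[OF assms, of "\<lambda>M. M$j$j"] by (simp add: matrix_matrix_mult_def transpose_def)
  then have "R$k$j = 0" for k j
    by (subst (asm) sum_nonneg_eq_0_iff) auto
  then show ?thesis by (simp add: vec_eq_iff)
qed

text \<open>With \<open>M\<^sup>+\<close> a pseudo-inverse of the symmetric matrix \<open>M = A\<^sup>T A\<close>, the matrix \<open>M\<^sup>+ A\<^sup>T\<close>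
  satisfies the Penrose conditions.\<close>
lemma penrose_conditions_exist:
  fixes A :: "real^'n^'m"
  shows "\<exists>B. penrose_conditions A B"
proof -
  define M where "M = transpose A ** A"
  have "transpose M = M" by (simp add: M_def matrix_transpose_mul)
  then obtain Mp where Mp: "M ** Mp ** M = M" "Mp ** M ** Mp = Mp" "M ** Mp = Mp ** M" "transpose Mp = Mp"
    by (rule symmetric_pseudo_inverse)
  define Q where "Q = Mp ** M"
  have tQ: "transpose Q = Q" by (simp add: Q_def matrix_transpose_mul Mp(3,4) \<open>transpose M = M\<close>)
  have MQ: "M ** Q = M" and QM: "Q ** M = M" using Mp(1,3) by (simp_all add: Q_def matrix_mul_assoc)
  have "transpose (A - A ** Q) ** (A - A ** Q) = M - M ** Q - (Q ** M - Q ** (M ** Q))"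
    by (simp add: M_def transpose_diff matrix_transpose_mul tQ matrix_diff_ldistrib matrix_diff_rdistrib matrix_mul_assoc)
  then have AQ: "A ** Q = A" using gram_eq_0_imp_eq_0 MQ QM by fastforce
  have "penrose_conditions A (Mp ** transpose A)"
    unfolding penrose_conditions_def
  proof (intro conjI)
    show "A ** (Mp ** transpose A) ** A = A"
      using AQ by (simp add: Q_def M_def matrix_mul_assoc)
    show "Mp ** transpose A ** A ** (Mp ** transpose A) = Mp ** transpose A"
      using Mp(2) by (simp add: M_def matrix_mul_assoc)
    show "transpose (A ** (Mp ** transpose A)) = A ** (Mp ** transpose A)"
      by (simp add: matrix_transpose_mul Mp(4) matrix_mul_assoc)
    show "transpose (Mp ** transpose A ** A) = Mp ** transpose A ** A"
      using tQ by (simp add: Q_def M_def matrix_mul_assoc)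
  qed
  then show ?thesis by blast
qed

lemma pinv_penrose_conditions: "penrose_conditions A (pinv A)"
proof -
  have "\<exists>!B. penrose_conditions A B" using penrose_conditions_exist penrose_conditions_unique by blast
  then show ?thesis unfolding pinv_def penrose_conditions_def[symmetric] by (rule theI')
qed

lemma nuclear_norm_orthogonal_projection:
  fixes P :: "real^'n^'n"
  assumes sym: "transpose P = P" and idem: "P ** P = P"
  shows "nuclear_norm P = real (rank P)"
proof -
  obtain V D where oV: "orthogonal_matrix V" and dD: "is_diagonal D" and P: "P = V ** D ** transpose V"
    using spectral_theorem[OF sym] .
  have nn: "nuclear_norm P = (\<Sum>i\<in>UNIV. sqrt (D$i$i))"
    by (rule nuclear_norm_spectral[OF oV dD]) (simp add: sym idem P[symmetric])
  have "V ** (D ** D) ** transpose V = V ** D ** transpose V"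
    using idem by (simp only: P orthogonal_conj_mult[OF oV])
  then have "D ** D = D" by (metis orthogonal_conj_cancel[OF oV])
  moreover have "(D ** D)$i$i = D$i$i * D$i$i" for i by (simp add: diagonal_matrix_mult[OF dD dD])
  ultimately have "D$i$i * D$i$i = D$i$i" for i by simp
  then have "sqrt (D$i$i) = (if D$i$i \<noteq> 0 then 1 else 0)" for i
    by (metis mult_cancel_right1 real_sqrt_one real_sqrt_zero)
  then have "nuclear_norm P = real (card {i. D$i$i \<noteq> 0})"
    using nn by (simp add: sum.If_cases)
  also have "card {i. D$i$i \<noteq> 0} = rank P"
    by (simp add: P rank_orthogonal_conj[OF oV] rank_diagonal[OF dD])
  finally show ?thesis .
qed

lemma matrix_mult_pinv_mult: "A ** (pinv A ** A) = A"
  using pinv_penrose_conditions[of A] by (simp add: penrose_conditions_def matrix_mul_assoc)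

lemma nuclear_norm_pinv_mult: "nuclear_norm (pinv A ** A) = real (rank A)"
proof -
  have sym: "transpose (pinv A ** A) = pinv A ** A" and "pinv A ** A ** pinv A = pinv A"
    using pinv_penrose_conditions[of A] by (simp_all add: penrose_conditions_def)
  then have "(pinv A ** A) ** (pinv A ** A) = pinv A ** A" by (simp add: matrix_mul_assoc)
  moreover have "rank (pinv A ** A) = rank A"
    by (metis antisym matrix_mult_pinv_mult rank_mul_le_right)
  ultimately show ?thesis using nuclear_norm_orthogonal_projection[OF sym] by simp
qed

lemma rpca_opt_imp_rlrr_opt:
  assumes "rpca_opt X lam f A E"
  shows "rlrr_opt X lam f (pinv A ** A) E"
proof -
  have A: "X - E = A" and
    min: "\<And>A' E'. X = A' + E' \<Longrightarrow> real (rank A) + lam * f E \<le> real (rank A') + lam * f E'"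
    using assms by (auto simp: rpca_opt_def)
  have "nuclear_norm (pinv A ** A) + lam * f E \<le> nuclear_norm Z' + lam * f E'"
    if "X - E' = (X - E') ** Z'" for Z' E'
    using min[of "X - E'" E'] rank_le_nuclear_norm[OF that] by (simp add: nuclear_norm_pinv_mult)
  then show ?thesis using A by (simp add: rlrr_opt_def matrix_mult_pinv_mult)
qed

lemma rlrr_opt_imp_rpca_opt:
  assumes "rlrr_opt X lam f Z E"
  shows "rpca_opt X lam f (X - E) E"
proof -
  have feas: "X - E = (X - E) ** Z" and
    min: "\<And>Z' E'. X - E' = (X - E') ** Z' \<Longrightarrow> nuclear_norm Z + lam * f E \<le> nuclear_norm Z' + lam * f E'"
    using assms by (auto simp: rlrr_opt_def)
  have "real (rank (X - E)) + lam * f E \<le> real (rank A') + lam * f E'" if "X = A' + E'" for A' E'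
  proof -
    have "X - E' = A'" using that by simp
    then have "nuclear_norm Z + lam * f E \<le> real (rank A') + lam * f E'"
      using min[of E' "pinv A' ** A'"] by (simp add: matrix_mult_pinv_mult nuclear_norm_pinv_mult)
    then show ?thesis using rank_le_nuclear_norm[OF feas] by simp
  qed
  then show ?thesis by (simp add: rpca_opt_def)
qed

theorem theorem2:
  fixes X :: "real^'n^'m" and lam :: real and f :: "real^'n^'m \<Rightarrow> real"
  assumes "lam > 0"
  shows "(\<forall>A E. rpca_opt X lam f A E \<longrightarrow> rlrr_opt X lam f (pinv A ** A) E)
       \<and> (\<forall>Z E. rlrr_opt X lam f Z E \<longrightarrow> rpca_opt X lam f (X - E) E)"
  using rpca_opt_imp_rlrr_opt rlrr_opt_imp_rpca_opt by blast

end
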